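(* The map $H_2$ satisfies $H_2\circ(12)=(12)(34)\circ H_2$.
   Context: Work over $\mathbb F_2$. $E(r)$ is the simplicial set whose $n$-simplices are tuples $(\sigma_0,\dots,\sigma_n)$ in $\Sigma_r$ ($d_i$ deletes, $s_i$ repeats the $i$-th entry), with $\Sigma_r$ acting by left multiplication entrywise; $\mathcal E(r)=N_*(E(r))$ is its normalized chain complex over $\mathbb F_2$ with the induced action. $\circ_E:E(2)\times E(2)\times E(2)\to E(4)$ applies coordinatewise the block composition $\Sigma_2\times\Sigma_2\times\Sigma_2\to\Sigma_4$ of permutations. The Shih homotopy $SHI:N_n(X\times Y)\to N_{n+1}(X\times Y)$ is zero for $n=0$, and for $n>0$ $$SHI(x\times y)=\sum s_{v_p+m}\cdots s_{v_1+m}s_{m-1}d_{n-p+1}\cdots d_nx\times s_{w_{q+1}+m}\cdots s_{w_1+m}d_{n-p-q}\cdots d_{n-p-1}y,$$ $m=n-p-q$, sum over disjoint $\{v_1<\dots<v_p\},\{w_1<\dots<w_{q+1}\}\subseteq\{0,\dots,p+q\}$ with $0\le p\le n-1$, $0\le q\le n-p-1$. $H_2:\mathcal E(2)\to\mathcal E(4)$ is the degree $1$ linear map $H_2(\sigma_0,\dots,\sigma_n)=N_*(\circ_E)((e,\dots,e)\otimes SHI(\sigma_0,\dots,\sigma_n)^{\otimes2})$, where $SHI(\sigma_0,\dots,\sigma_n)^{\otimes2}$ is $SHI$ of the diagonal simplex $(\sigma_0,\dots,\sigma_n)\times(\sigma_0,\dots,\sigma_n)$ of $E(2)\times E(2)$,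 paired with the constant simplex $(e,\dots,e)$ of $E(2)$ of the same dimension. $(12)$ acts on $\mathcal E(2)$ and $(12)(34)$ on $\mathcal E(4)$. *)

theory Defs
  imports "HOL-Combinatorics.Permutations"
begin

(* Permutations of {0..<r} (0-indexed), as functions nat => nat fixing everything >= r. *)
type_synonym perm = "nat \<Rightarrow> nat"

(* Simplices of E(r): an n-simplex is a list (sigma_0,...,sigma_n) of permutations in Sigma_r. *)
definition E_simplex :: "nat \<Rightarrow> perm list \<Rightarrow> bool" where
  "E_simplex r xs \<longleftrightarrow> xs \<noteq> [] \<and> (\<forall>p\<in>set xs. p permutes {..<r})"

definition face :: "nat \<Rightarrow> 'a list \<Rightarrow> 'a list" where
  "face i xs = take i xs @ drop (Suc i) xs"

definition degen :: "nat \<Rightarrow> 'a list \<Rightarrow> 'a list" where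
  "degen i xs = take (Suc i) xs @ drop i xs"

definition degenerate :: "'a list \<Rightarrow> bool" where
  "degenerate xs \<longleftrightarrow> (\<exists>i. Suc i < length xs \<and> xs ! i = xs ! Suc i)"

definition pdegenerate :: "'a list \<times> 'b list \<Rightarrow> bool" where
  "pdegenerate t \<longleftrightarrow> (\<exists>i. Suc i < length (fst t) \<and> fst t ! i = fst t ! Suc i
                              \<and> snd t ! i = snd t ! Suc i)"

(* Elements of the normalized chains N_*(E(r)) over F_2: finite sets of
   nondegenerate simplices (sum = symmetric difference). *)
definition E_chain :: "nat \<Rightarrow> perm list set \<Rightarrow> bool" where
  "E_chain r c \<longleftrightarrow> finite c \<and> (\<forall>s\<in>c. E_simplex r s \<and> \<not> degenerate s)"

definition SHI_index :: "nat \<Rightarrow> (nat \<times> nat \<times> nat set \<times> nat set) set" where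
  "SHI_index n = {(p, q, V, W). p < n \<and> q < n - p \<and> V \<subseteq> {0..p+q} \<and> W \<subseteq> {0..p+q}
        \<and> V \<inter> W = {} \<and> card V = p \<and> card W = Suc q}"

(* One summand of the Shih formula; fold applies operators in list order
   (i.e. the rightmost operator of the composite is applied first). *)
definition SHI_term :: "nat \<Rightarrow> nat \<times> nat \<times> nat set \<times> nat set \<Rightarrow> 'a list \<times> 'b list
     \<Rightarrow> 'a list \<times> 'b list" where
  "SHI_term n i t = (case i of (p, q, V, W) \<Rightarrow>
     (let m = n - p - q in
      (fold degen (map (\<lambda>v. v + m) (sorted_list_of_set V))
         (degen (m - 1) (fold face (rev [n - p + 1..<n + 1]) (fst t))),
       fold degen (map (\<lambda>w. w + m) (sorted_list_of_set W))
         (fold face (rev [n - p - q..<n - p]) (snd t)))))"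

(* Shih homotopy on a generator x \<times> y of N_n(X \<times> Y): the mod-2 sum of the summands,
   with degenerate summands discarded (they vanish in normalized chains). *)
definition SHI :: "'a list \<times> 'b list \<Rightarrow> ('a list \<times> 'b list) set" where
  "SHI t = (let n = length (fst t) - 1 in
     if n = 0 then {}
     else {u. odd (card {i \<in> SHI_index n. SHI_term n i t = u}) \<and> \<not> pdegenerate u})"

(* block composition Sigma_2 x Sigma_2 x Sigma_2 -> Sigma_4 *)
definition block :: "perm \<Rightarrow> perm \<Rightarrow> perm \<Rightarrow> perm" where
  "block s t1 t2 = (\<lambda>k. if k < 4 then 2 * s (k div 2) + (if k div 2 = 0 then t1 else t2) (k mod 2)
                         else k)"

(* H_2 on a generator sigma: N_*(circ_E)((e,...,e) x SHI(sigma x sigma)), mod 2,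
   degenerate images discarded *)
definition H2_gen :: "perm list \<Rightarrow> perm list set" where
  "H2_gen s = {c. odd (card {u \<in> SHI (s, s). map2 (block id) (fst u) (snd u) = c})
                  \<and> \<not> degenerate c}"

definition H2 :: "perm list set \<Rightarrow> perm list set" where
  "H2 c = {u. odd (card {s \<in> c. u \<in> H2_gen s})}"

definition E_act :: "perm \<Rightarrow> perm list set \<Rightarrow> perm list set" where
  "E_act \<tau> c = map (\<lambda>\<sigma>. \<tau> \<circ> \<sigma>) ` c"

end

theory Submission
  imports Defs
begin

text \<open>Every ingredient of \<open>H\<^sub>2\<close> is natural for entrywise post-composition with an injective map:
  faces and degeneracies commute with \<open>map\<close>, so the Shih homotopy of \<open>\<tau>\<sigma> \<times> \<tau>\<sigma>\<close> is the image
  of that of \<open>\<sigma> \<times> \<sigma>\<close>, and (non)degeneracy is preserved. On \<open>\<Sigma>\<^sub>2\<close> the block composition satisfies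
  \<open>e \<circ> (\<tau>a, \<tau>b) = (12)(34) \<circ> (e \<circ> (a, b))\<close>. Since all sums are mod-2 counts, an injective
  relabelling of summands and results transports them.\<close>

text \<open>Chains over \<open>\<bbbF>\<^sub>2\<close> are sets of simplices; \<open>mod2_sum S A\<close> is the sum \<open>\<Sum>x\<in>S. A x\<close>.\<close>

definition mod2_sum :: "'a set \<Rightarrow> ('a \<Rightarrow> 'b set) \<Rightarrow> 'b set" where
  "mod2_sum S A = {c. odd (card {x \<in> S. c \<in> A x})}"

lemma mod2_sum_memD: "c \<in> mod2_sum S A \<Longrightarrow> \<exists>x\<in>S. c \<in> A x"
proof (rule ccontr)
  assume "c \<in> mod2_sum S A" "\<not> (\<exists>x\<in>S. c \<in> A x)"
  then have "odd (card {x \<in> S. c \<in> A x})" "{x \<in> S. c \<in> A x} = {}"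
    unfolding mod2_sum_def by auto
  then show False by simp
qed

lemma mod2_sum_image:
  assumes "inj_on f S" "inj g" "\<And>x. x \<in> S \<Longrightarrow> A' (f x) = g ` A x"
  shows "mod2_sum (f ` S) A' = g ` mod2_sum S A"
proof -
  have fibre: "{y \<in> f ` S. g c \<in> A' y} = f ` {x \<in> S. c \<in> A x}" for c
    using assms(3) inj_eq[OF assms(2)] by auto
  have count: "card {y \<in> f ` S. g c \<in> A' y} = card {x \<in> S. c \<in> A x}" for c
    unfolding fibre by (rule card_image[OF inj_on_subset[OF assms(1)]]) blast
  have outside: "{y \<in> f ` S. c \<in> A' y} = {}" if "c \<notin> range g" for c
    using that assms(3) by auto
  show ?thesis
  proof (intro set_eqI)
    fix c
    show "c \<in> mod2_sum (f ` S) A' \<longleftrightarrow> c \<in> g ` mod2_sum S A"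
    proof (cases "c \<in> range g")
      case True
      then obtain c' where "c = g c'" by blast
      then show ?thesis
        using count[of c'] inj_image_mem_iff[OF assms(2)] by (simp add: mod2_sum_def)
    next
      case False
      then show ?thesis
        unfolding mod2_sum_def by (auto simp: outside)
    qed
  qed
qed

lemma mod2_sum_singleton_map:
  assumes "inj g"
  shows "mod2_sum S (\<lambda>x. {g (M x)}) = g ` mod2_sum S (\<lambda>x. {M x})"
  using mod2_sum_image[of id S g "\<lambda>x. {g (M x)}" "\<lambda>x. {M x}"] assms by simp

lemma filter_image:
  "(\<And>c. c \<in> B \<Longrightarrow> P (g c) = Q c) \<Longrightarrow> {c \<in> g ` B. P c} = g ` {c \<in> B. Q c}"
  by auto

lemma mod2_sum_singleton: "mod2_sum S (\<lambda>x. {M x}) = {c. odd (card {x \<in> S. M x = c})}"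
proof -
  have "{x \<in> S. c \<in> {M x}} = {x \<in> S. M x = c}" for c by blast
  then show ?thesis unfolding mod2_sum_def by simp
qed

lemma SHI_eq_mod2_sum:
  "SHI t = (let n = length (fst t) - 1 in
     if n = 0 then {}
     else {u \<in> mod2_sum (SHI_index n) (\<lambda>i. {SHI_term n i t}). \<not> pdegenerate u})"
  unfolding SHI_def mod2_sum_singleton Let_def by simp

lemma H2_gen_eq_mod2_sum:
  "H2_gen s = {c \<in> mod2_sum (SHI (s, s)) (\<lambda>u. {map2 (block id) (fst u) (snd u)}). \<not> degenerate c}"
  unfolding H2_gen_def mod2_sum_singleton by simp

lemma H2_eq_mod2_sum: "H2 c = mod2_sum c H2_gen"
  unfolding H2_def mod2_sum_def ..

lemma face_map: "face i (map h xs) = map h (face i xs)"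
  by (simp add: face_def take_map drop_map)

lemma degen_map: "degen i (map h xs) = map h (degen i xs)"
  by (simp add: degen_def take_map drop_map)

lemma fold_face_map: "fold face is (map h xs) = map h (fold face is xs)"
  by (induction "is" arbitrary: xs) (simp_all add: face_map)

lemma fold_degen_map: "fold degen is (map h xs) = map h (fold degen is xs)"
  by (induction "is" arbitrary: xs) (simp_all add: degen_map)

lemma set_face_subset: "set (face i xs) \<subseteq> set xs"
  unfolding face_def by (auto dest: in_set_takeD in_set_dropD)

lemma set_degen_subset: "set (degen i xs) \<subseteq> set xs"
  unfolding degen_def by (auto dest: in_set_takeD in_set_dropD)

lemma set_fold_face_subset: "set (fold face is xs) \<subseteq> set xs"
  by (induction "is" arbitrary: xs) (simp_all, meson set_face_subset order_trans)

lemma set_fold_degen_subset: "set (fold degen is xs) \<subseteq> set xs"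
  by (induction "is" arbitrary: xs) (simp_all, meson set_degen_subset order_trans)

lemma SHI_term_map:
  "SHI_term n i (map h xs, map g ys) = map_prod (map h) (map g) (SHI_term n i (xs, ys))"
  by (cases i) (simp add: SHI_term_def Let_def fold_face_map fold_degen_map degen_map)

lemma SHI_term_set_subset:
  "set (fst (SHI_term n i (xs, ys))) \<subseteq> set xs" "set (snd (SHI_term n i (xs, ys))) \<subseteq> set ys"
proof -
  have "set (fold degen is (degen j (fold face js xs))) \<subseteq> set xs" for "is" j js
    by (meson order_trans set_fold_face_subset set_fold_degen_subset set_degen_subset)
  moreover have "set (fold degen is (fold face js ys)) \<subseteq> set ys" for "is" js
    by (meson order_trans set_fold_face_subset set_fold_degen_subset)
  ultimately show "set (fst (SHI_term n i (xs, ys))) \<subseteq> set xs" "set (snd (SHI_term n i (xs, ys))) \<subseteq> set ys"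
    by (cases i, simp add: SHI_term_def Let_def)+
qed

lemma length_fold_face:
  "b \<le> length xs \<Longrightarrow> length (fold face (rev [a..<b]) xs) = length xs - (b - a)"
proof (induction b arbitrary: xs)
  case (Suc b)
  then show ?case
    by (cases "a \<le> b") (simp_all add: face_def)
qed simp

lemma length_fold_degen:
  "(\<And>j. j < length L \<Longrightarrow> L ! j < length xs + j) \<Longrightarrow>
   length (fold degen L xs) = length xs + length L"
proof (induction L arbitrary: xs)
  case (Cons a L)
  have "a < length xs" using Cons.prems[of 0] by simp
  then have "length (degen a xs) = Suc (length xs)" by (simp add: degen_def)
  moreover have "j < length L \<Longrightarrow> L ! j < length (degen a xs) + j" for j
    using Cons.prems[of "Suc j"] calculation by simp
  ultimately show ?case using Cons.IH[of "degen a xs"] by simp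
qed simp

lemma sorted_wrt_less_nth_gap:
  "sorted_wrt (<) L \<Longrightarrow> j + d < length L \<Longrightarrow> L ! j + d \<le> L ! (j + d)"
proof (induction d)
  case (Suc d)
  then have "L ! (j + d) < L ! (j + Suc d)" by (simp add: sorted_wrt_nth_less)
  with Suc show ?case by simp
qed simp

lemma sorted_list_of_set_nth_gap:
  assumes "V \<subseteq> {..N}" "j < card V"
  shows "sorted_list_of_set V ! j + (card V - Suc j) \<le> N"
proof -
  let ?L = "sorted_list_of_set V"
  have fin: "finite V" using assms(1) finite_subset by blast
  have "?L ! j + (card V - Suc j) \<le> ?L ! (card V - 1)"
    using sorted_wrt_less_nth_gap[OF strict_sorted_list_of_set, of j "card V - Suc j" V]
      assms(2) fin by simp
  also have "?L ! (card V - 1) \<in> V"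
    using assms(2) fin nth_mem[of "card V - 1" ?L] by simp
  then have "?L ! (card V - 1) \<le> N" using assms(1) by auto
  finally show ?thesis .
qed

lemma length_fold_degen_shifted:
  assumes "V \<subseteq> {..N}" "Suc (N + m) < length xs + card V"
  shows "length (fold degen (map (\<lambda>v. v + m) (sorted_list_of_set V)) xs) = length xs + card V"
proof -
  have "sorted_list_of_set V ! j + m < length xs + j" if "j < card V" for j
    using sorted_list_of_set_nth_gap[OF assms(1) that] assms(2) by linarith
  then show ?thesis
    by (subst length_fold_degen) (auto simp: finite_subset[OF assms(1)])
qed

lemma SHI_term_length:
  assumes "i \<in> SHI_index n" "length xs = Suc n" "length ys = Suc n"
  shows "length (fst (SHI_term n i (xs, ys))) = n + 2"
    and "length (snd (SHI_term n i (xs, ys))) = n + 2"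
proof -
  obtain p q V W where i: "i = (p, q, V, W)" by (cases i)
  have pq: "p < n" "q < n - p" "V \<subseteq> {..p + q}" "W \<subseteq> {..p + q}" "card V = p" "card W = Suc q"
    using assms(1) unfolding i SHI_index_def by (auto simp: atLeast0AtMost)
  define m where "m = n - p - q"
  define xs' where "xs' = degen (m - 1) (fold face (rev [n - p + 1..<n + 1]) xs)"
  define ys' where "ys' = fold face (rev [m..<n - p]) ys"
  have "length (fold face (rev [n - p + 1..<n + 1]) xs) = n + 1 - p"
    using length_fold_face[of "n + 1" xs "n - p + 1"] assms(2) pq by simp
  then have "length xs' = n + 2 - p"
    using pq by (simp add: xs'_def degen_def m_def)
  then have "length (fold degen (map (\<lambda>v. v + m) (sorted_list_of_set V)) xs') = n + 2"
    using length_fold_degen_shifted[OF pq(3), of m xs'] pq by (simp add: m_def)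
  then show "length (fst (SHI_term n i (xs, ys))) = n + 2"
    unfolding SHI_term_def i Let_def prod.case fst_conv m_def[symmetric] xs'_def[symmetric] .
  have "length ys' = n + 1 - q"
    using length_fold_face[of "n - p" ys m] assms(3) pq by (simp add: ys'_def m_def)
  then have "length (fold degen (map (\<lambda>v. v + m) (sorted_list_of_set W)) ys') = n + 2"
    using length_fold_degen_shifted[OF pq(4), of m ys'] pq by (simp add: m_def)
  then show "length (snd (SHI_term n i (xs, ys))) = n + 2"
    unfolding SHI_term_def i Let_def prod.case snd_conv m_def[symmetric] ys'_def[symmetric] .
qed

lemma degenerate_map: "inj h \<Longrightarrow> degenerate (map h xs) = degenerate xs"
  by (auto simp: degenerate_def inj_eq)

text \<open>The length hypothesis matters: \<open>pdegenerate\<close> reads the second list at positions bounded by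
  the length of the first, and an out-of-range \<open>nth\<close> does not commute with \<open>map\<close>. This is why
  the lengths of the Shih summands are computed above.\<close>

lemma pdegenerate_map_prod:
  "inj h \<Longrightarrow> inj g \<Longrightarrow> length xs = length ys \<Longrightarrow>
   pdegenerate (map_prod (map h) (map g) (xs, ys)) = pdegenerate (xs, ys)"
  by (auto simp: pdegenerate_def inj_eq)

lemma inj_map_prod_map: "inj h \<Longrightarrow> inj g \<Longrightarrow> inj (map_prod (map h) (map g))"
  using map_prod_inj_on[OF inj_mapI inj_mapI] by simp

lemma SHI_map:
  assumes "inj h" "inj g" "length xs = length ys"
  shows "SHI (map h xs, map g ys) = map_prod (map h) (map g) ` SHI (xs, ys)"
proof (cases "length xs - 1 = 0")
  case True
  then show ?thesis by (simp add: SHI_def)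
next
  case False
  define n where "n = length xs - 1"
  have lengths: "length xs = Suc n" "length ys = Suc n"
    using False assms(3) by (simp_all add: n_def)
  let ?F = "map_prod (map h) (map g)"
  let ?S = "mod2_sum (SHI_index n) (\<lambda>i. {SHI_term n i (xs, ys)})"
  have "SHI (map h xs, map g ys)
      = {u \<in> mod2_sum (SHI_index n) (\<lambda>i. {?F (SHI_term n i (xs, ys))}). \<not> pdegenerate u}"
    using False by (simp add: SHI_eq_mod2_sum SHI_term_map n_def Let_def)
  also have "mod2_sum (SHI_index n) (\<lambda>i. {?F (SHI_term n i (xs, ys))}) = ?F ` ?S"
    by (rule mod2_sum_singleton_map[OF inj_map_prod_map[OF assms(1,2)]])
  also have "{u \<in> ?F ` ?S. \<not> pdegenerate u} = ?F ` {u \<in> ?S. \<not> pdegenerate u}"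
  proof (rule filter_image)
    fix u assume "u \<in> ?S"
    then obtain i where "i \<in> SHI_index n" "u = SHI_term n i (xs, ys)"
      by (auto dest: mod2_sum_memD)
    then have "length (fst u) = length (snd u)"
      using SHI_term_length[OF _ lengths] by simp
    then show "(\<not> pdegenerate (?F u)) = (\<not> pdegenerate u)"
      using pdegenerate_map_prod[OF assms(1,2), of "fst u" "snd u"] by simp
  qed
  also have "{u \<in> ?S. \<not> pdegenerate u} = SHI (xs, ys)"
    using False by (simp add: SHI_eq_mod2_sum n_def Let_def)
  finally show ?thesis .
qed

lemma SHI_set_subset:
  assumes "u \<in> SHI (xs, ys)"
  shows "set (fst u) \<subseteq> set xs" "set (snd u) \<subseteq> set ys"
proof -
  obtain n where "u \<in> mod2_sum (SHI_index n) (\<lambda>i. {SHI_term n i (xs, ys)})"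
    using assms unfolding SHI_eq_mod2_sum Let_def by (auto split: if_splits)
  then obtain i where "u = SHI_term n i (xs, ys)"
    by (auto dest: mod2_sum_memD)
  then show "set (fst u) \<subseteq> set xs" "set (snd u) \<subseteq> set ys"
    using SHI_term_set_subset by simp_all
qed

abbreviation tau :: perm where "tau \<equiv> transpose 0 1"
abbreviation rho :: perm where "rho \<equiv> transpose 0 1 \<circ> transpose 2 3"

lemma rho_block: "j < 2 \<Longrightarrow> x < 2 \<Longrightarrow> rho (2 * j + x) = 2 * j + tau x"
  by (auto simp: transpose_def less_2_cases_iff)

lemma inj_rho: "inj rho"
  by (intro inj_compose inj_transpose)

lemma inj_map_comp_left: "inj f \<Longrightarrow> inj (map ((\<circ>) f))"
  by (intro inj_mapI fun.inj_map)

lemma block_tau: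
  assumes "a permutes {..<2}" "b permutes {..<2}"
  shows "block id (tau \<circ> a) (tau \<circ> b) = rho \<circ> block id a b"
proof
  fix k :: nat
  show "block id (tau \<circ> a) (tau \<circ> b) k = (rho \<circ> block id a b) k"
  proof (cases "k < 4")
    case True
    define y where "y = (if k div 2 = 0 then a else b) (k mod 2)"
    have "y < 2"
      using permutes_in_image[OF assms(1), of "k mod 2"] permutes_in_image[OF assms(2), of "k mod 2"]
      unfolding y_def by (cases "k div 2 = 0") auto
    moreover have "block id (tau \<circ> a) (tau \<circ> b) k = 2 * (k div 2) + tau y"
      using True by (simp add: block_def y_def)
    moreover have "k div 2 < 2" using True by simp
    ultimately show ?thesis
      using True rho_block[of "k div 2" y] by (simp add: block_def y_def[symmetric])
  qed (simp add: block_def transpose_def)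
qed

lemma map2_block_tau:
  assumes "\<forall>p\<in>set xs. p permutes {..<2}" "\<forall>p\<in>set ys. p permutes {..<2}"
  shows "map2 (block id) (map ((\<circ>) tau) xs) (map ((\<circ>) tau) ys)
       = map ((\<circ>) rho) (map2 (block id) xs ys)"
proof (rule nth_equalityI)
  fix i assume "i < length (map2 (block id) (map ((\<circ>) tau) xs) (map ((\<circ>) tau) ys))"
  then have i: "i < length xs" "i < length ys" by simp_all
  then have "xs ! i permutes {..<2}" "ys ! i permutes {..<2}"
    using assms by simp_all
  then show "map2 (block id) (map ((\<circ>) tau) xs) (map ((\<circ>) tau) ys) ! i
      = map ((\<circ>) rho) (map2 (block id) xs ys) ! i"
    using i block_tau[of "xs ! i" "ys ! i"] by simp
qed simp

lemma H2_gen_tau: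
  assumes "\<forall>p\<in>set s. p permutes {..<2}"
  shows "H2_gen (map ((\<circ>) tau) s) = map ((\<circ>) rho) ` H2_gen s"
proof -
  have inj_comp_tau: "inj ((\<circ>) tau)" and inj_comp_rho: "inj ((\<circ>) rho)"
    by (rule fun.inj_map, rule inj_transpose, rule fun.inj_map, rule inj_rho)
  let ?F = "map_prod (map ((\<circ>) tau)) (map ((\<circ>) tau))"
  let ?join = "\<lambda>u. map2 (block id) (fst u) (snd u)"
  have "?join (?F u) = map ((\<circ>) rho) (?join u)" if "u \<in> SHI (s, s)" for u
    using map2_block_tau SHI_set_subset[OF that] assms by (simp add: subset_iff)
  then have sum_eq: "mod2_sum (?F ` SHI (s, s)) (\<lambda>u. {?join u})
      = map ((\<circ>) rho) ` mod2_sum (SHI (s, s)) (\<lambda>u. {?join u})"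
    using inj_map_prod_map[OF inj_comp_tau inj_comp_tau] inj_mapI[OF inj_comp_rho]
    by (intro mod2_sum_image) (auto intro: inj_on_subset)
  show ?thesis
    unfolding H2_gen_eq_mod2_sum SHI_map[OF inj_comp_tau inj_comp_tau refl] sum_eq
    by (rule filter_image) (simp only: degenerate_map[OF inj_comp_rho])
qed

theorem mainTheorem7:
  assumes "E_chain 2 c"
  shows "H2 (E_act (transpose 0 1) c) = E_act (transpose 0 1 \<circ> transpose 2 3) (H2 c)"
  unfolding E_act_def H2_eq_mod2_sum
proof (rule mod2_sum_image)
  show "inj_on (map ((\<circ>) tau)) c"
    using inj_map_comp_left[OF inj_transpose] by (rule inj_on_subset) simp
  show "inj (map ((\<circ>) rho))"
    using inj_map_comp_left[OF inj_rho] .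
  fix s assume "s \<in> c"
  then have "\<forall>p\<in>set s. p permutes {..<2}"
    using assms unfolding E_chain_def E_simplex_def by auto
  then show "H2_gen (map ((\<circ>) tau) s) = map ((\<circ>) rho) ` H2_gen s"
    by (rule H2_gen_tau)
qed

end
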